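(* Let $h:\{x_1,\dots,x_n\}^*\to\{a_1,\dots,a_k\}^*$ be a solution of rank $n-1$ of both equations $E$ and $E'$, and let $\alpha\in\mathbb N^k$. Then $\mathcal S_E(L(\vartheta_\alpha\circ h))$ and $\mathcal S_{E'}(L(\vartheta_\alpha\circ h))$ are linearly dependent over $\mathbb Q(x)$.
   Context: An equation is a pair $(u,v)$ of words over $\{x_1,\dots,x_n\}$; a solution is a morphism $h$ with $h(u)=h(v)$. For $h:\{x_1,\dots,x_n\}^*\to\{a_1,\dots,a_k\}^*$, $\gamma(h)_i=(|h(x_1)|_{a_i},\dots,|h(x_n)|_{a_i})$ and the rank of $h$ is the dimension of the $\mathbb Q$-span of the $\gamma(h)_i$. $L(h)=(|h(x_1)|,\dots,|h(x_n)|)$. $\mathbb N$ is the positive integers; for $\alpha\in\mathbb N^k$, $\vartheta_\alpha$ is the endomorphism of $\{a_1,\dots,a_k\}^*$ given by $a_i\mapsto a_i^{(\alpha)_i}$. For $E=(x_{i_1}\cdots x_{i_r},\,x_{j_1}\cdots x_{j_s})$, $S_{E,x_j}=\sum_{a:\,i_a=j}\prod_{t=1}^{a-1}X_{i_t}-\sum_{a:\,j_a=j}\prod_{t=1}^{a-1}X_{j_t}$ (empty product $=1$); for $\beta\in\mathbb N_0^n$, $\mathcal S_E(\beta)=(S_{E,x_1}(\beta),\dots,S_{E,x_n}(\beta))\in\mathbb Z[x]^n$ where $p(\beta)$ is the image of $p$ under $X_i\mapsto x^{(\beta)_i}$. *)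

theory Defs
  imports Main "HOL-Library.Function_Algebras" "HOL-Computational_Algebra.Polynomial" "HOL-Computational_Algebra.Fraction_Field"
begin

(* Variables x_1..x_n are encoded as naturals 0..n-1, letters a_1..a_k as 0..k-1.
   A word is a nat list; a morphism h is given by the images h i of the variables. *)

definition morph :: "(nat \<Rightarrow> nat list) \<Rightarrow> nat list \<Rightarrow> nat list" where
  "morph h w = concat (map h w)"

definition is_morph :: "nat \<Rightarrow> nat \<Rightarrow> (nat \<Rightarrow> nat list) \<Rightarrow> bool" where
  "is_morph n k h \<longleftrightarrow> (\<forall>i<n. set (h i) \<subseteq> {..<k})"

definition is_equation :: "nat \<Rightarrow> nat list \<times> nat list \<Rightarrow> bool" where
  "is_equation n E \<longleftrightarrow> set (fst E) \<subseteq> {..<n} \<and> set (snd E) \<subseteq> {..<n}"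

definition is_solution :: "(nat \<Rightarrow> nat list) \<Rightarrow> nat list \<times> nat list \<Rightarrow> bool" where
  "is_solution h E \<longleftrightarrow> morph h (fst E) = morph h (snd E)"

(* gamma(h)_i in Q^n, represented as a function nat => rat vanishing outside {..<n} *)
definition gamma :: "nat \<Rightarrow> (nat \<Rightarrow> nat list) \<Rightarrow> nat \<Rightarrow> (nat \<Rightarrow> rat)" where
  "gamma n h i = (\<lambda>j. if j < n then of_nat (count_list (h j) i) else 0)"

definition rank_morph :: "nat \<Rightarrow> nat \<Rightarrow> (nat \<Rightarrow> nat list) \<Rightarrow> nat" where
  "rank_morph n k h = vector_space.dim (\<lambda>(c::rat) (f::nat \<Rightarrow> rat). (\<lambda>j. c * f j)) (gamma n h ` {..<k})"

definition Lvec :: "(nat \<Rightarrow> nat list) \<Rightarrow> nat \<Rightarrow> nat" where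
  "Lvec h i = length (h i)"

definition theta :: "(nat \<Rightarrow> nat) \<Rightarrow> nat list \<Rightarrow> nat list" where
  "theta \<alpha> w = concat (map (\<lambda>c. replicate (\<alpha> c) c) w)"

(* One sum in S_{E,x_j}(beta): sum over positions a with w_a = j of x^(beta_{w_1}+...+beta_{w_{a-1}}),
   since (prod_{t<a} X_{w_t})(beta) = x^(sum_{t<a} beta_{w_t}). *)
definition S_side :: "nat list \<Rightarrow> nat \<Rightarrow> (nat \<Rightarrow> nat) \<Rightarrow> int poly" where
  "S_side w j \<beta> = (\<Sum>a<length w. if w ! a = j then monom 1 (\<Sum>t<a. \<beta> (w ! t)) else 0)"

definition S_poly :: "nat list \<times> nat list \<Rightarrow> nat \<Rightarrow> (nat \<Rightarrow> nat) \<Rightarrow> int poly" where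
  "S_poly E j \<beta> = S_side (fst E) j \<beta> - S_side (snd E) j \<beta>"

definition to_Qx :: "int poly \<Rightarrow> rat poly fract" where
  "to_Qx p = Fract (map_poly of_int p) 1"

definition lin_dep_Qx :: "nat \<Rightarrow> (nat \<Rightarrow> int poly) \<Rightarrow> (nat \<Rightarrow> int poly) \<Rightarrow> bool" where
  "lin_dep_Qx n s s' \<longleftrightarrow> (\<exists>c d :: rat poly fract. (c \<noteq> 0 \<or> d \<noteq> 0) \<and>
      (\<forall>j<n. c * to_Qx (s j) + d * to_Qx (s' j) = 0))"

end

theory Submission
  imports Defs
begin

text \<open>Write g = theta_alpha o h and, for a letter a and a word w, let P_a(w) (occurrence_poly a w) be the sum of x^s
  over the positions s of w carrying a. Cutting g(u) into the blocks g(x_i) gives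
  P_a(g(u)) = sum_j S_(u,x_j)(L(g)) * P_a(g(x_j)), so g(u) = g(v) says precisely that S_E(L(g)) lies
  in the kernel of the k x n matrix (P_a(g(x_j))) over Q[x]; so does S_E'(L(g)). At x = 1 this
  matrix becomes (alpha_a * gamma(h)_a), of rank n - 1, whose kernel is a line. A descent on degrees
  lifts this to Q[x]: a kernel vector vanishing at 1 is divisible by x - 1, and two kernel vectors
  that do not vanish at 1 have a constant combination that does.\<close>

section \<open>Dependent pairs and kernels\<close>

definition dependent_pair :: "nat \<Rightarrow> (nat \<Rightarrow> 'a::comm_ring_1) \<Rightarrow> (nat \<Rightarrow> 'a) \<Rightarrow> bool" where
  "dependent_pair n u v \<longleftrightarrow> (\<exists>c d. (c \<noteq> 0 \<or> d \<noteq> 0) \<and> (\<forall>j<n. c * u j + d * v j = 0))"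

definition in_kernel :: "nat \<Rightarrow> nat \<Rightarrow> (nat \<Rightarrow> nat \<Rightarrow> 'a::comm_ring_1) \<Rightarrow> (nat \<Rightarrow> 'a) \<Rightarrow> bool" where
  "in_kernel k n M u \<longleftrightarrow> (\<forall>i<k. (\<Sum>j<n. M i j * u j) = 0)"

lemma dependent_pair_commute: "dependent_pair n u v \<Longrightarrow> dependent_pair n v u"
  unfolding dependent_pair_def by (metis add.commute)

lemma dependent_pair_zero: "\<forall>j<n. u j = 0 \<Longrightarrow> dependent_pair n u v"
  unfolding dependent_pair_def by (rule exI[of _ 1], rule exI[of _ 0]) simp

lemma dependent_pair_if_minors_vanish:
  assumes "\<forall>p<n. \<forall>q<n. u p * v q = u q * v p"
  shows "dependent_pair n u v"
proof (cases "\<forall>j<n. u j = 0")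
  case True
  then show ?thesis by (rule dependent_pair_zero)
next
  case False
  then obtain p where p: "p < n" "u p \<noteq> 0" by blast
  have "\<forall>j<n. v p * u j + (- u p) * v j = 0"
    using assms p(1) by (auto simp: algebra_simps)
  with p(2) show ?thesis unfolding dependent_pair_def by (metis neg_equal_0_iff_equal)
qed

lemma dependent_pair_mult:
  fixes u w :: "nat \<Rightarrow> 'a::idom"
  assumes "dependent_pair n w v" "P \<noteq> 0" "\<forall>j<n. u j = P * w j"
  shows "dependent_pair n u v"
proof -
  obtain c d where cd: "c \<noteq> 0 \<or> d \<noteq> 0" "\<forall>j<n. c * w j + d * v j = 0"
    using assms(1) unfolding dependent_pair_def by blast
  have "\<forall>j<n. c * u j + (P * d) * v j = P * (c * w j + d * v j)"
    using assms(3) by (simp add: algebra_simps)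
  with cd assms(2) show ?thesis unfolding dependent_pair_def
    by (metis mult_eq_0_iff mult_zero_right)
qed

lemma dependent_pair_lincomb:
  fixes u w :: "nat \<Rightarrow> 'a::idom"
  assumes "dependent_pair n w v" "C \<noteq> 0" "\<forall>j<n. w j = C * u j + D * v j"
  shows "dependent_pair n u v"
proof -
  obtain c d where cd: "c \<noteq> 0 \<or> d \<noteq> 0" "\<forall>j<n. c * w j + d * v j = 0"
    using assms(1) unfolding dependent_pair_def by blast
  have "\<forall>j<n. (c * C) * u j + (c * D + d) * v j = c * w j + d * v j"
    using assms(3) by (simp add: algebra_simps)
  moreover have "c * C \<noteq> 0 \<or> c * D + d \<noteq> 0"
    using cd(1) assms(2) by auto
  ultimately show ?thesis using cd(2) unfolding dependent_pair_def by metis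
qed

lemma dependent_pair_hom:
  assumes "dependent_pair n u v" and "inj f" and "f 0 = 0"
    and "\<And>x y. f (x + y) = f x + f y" and "\<And>x y. f (x * y) = f x * f y"
  shows "dependent_pair n (f \<circ> u) (f \<circ> v)"
proof -
  obtain c d where cd: "c \<noteq> 0 \<or> d \<noteq> 0" "\<forall>j<n. c * u j + d * v j = 0"
    using assms(1) unfolding dependent_pair_def by blast
  have "f c \<noteq> 0 \<or> f d \<noteq> 0"
    using cd(1) assms(2,3) by (metis injD)
  moreover have "\<forall>j<n. f c * f (u j) + f d * f (v j) = 0"
    using cd(2) assms(3-5) by metis
  ultimately show ?thesis unfolding dependent_pair_def by auto
qed

lemma in_kernel_cong:
  assumes "\<forall>i<k. \<forall>j<n. M i j = M' i j" "\<forall>j<n. u j = u' j"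
  shows "in_kernel k n M u \<longleftrightarrow> in_kernel k n M' u'"
  using assms unfolding in_kernel_def by simp

lemma in_kernel_lincomb:
  assumes "in_kernel k n M u" "in_kernel k n M v"
  shows "in_kernel k n M (\<lambda>j. c * u j + d * v j)"
proof -
  have "(\<Sum>j<n. M i j * (c * u j + d * v j)) =
        c * (\<Sum>j<n. M i j * u j) + d * (\<Sum>j<n. M i j * v j)" for i
    by (simp add: sum_distrib_left sum.distrib algebra_simps)
  with assms show ?thesis unfolding in_kernel_def by simp
qed

lemma in_kernel_cancel:
  fixes M :: "nat \<Rightarrow> nat \<Rightarrow> 'a::idom"
  assumes "in_kernel k n M (\<lambda>j. P * w j)" "P \<noteq> 0"
  shows "in_kernel k n M w"
proof -
  have "(\<Sum>j<n. M i j * (P * w j)) = P * (\<Sum>j<n. M i j * w j)" for i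
    by (simp add: sum_distrib_left algebra_simps)
  with assms show ?thesis unfolding in_kernel_def by simp
qed

lemma in_kernel_scaled_rows:
  assumes "in_kernel k n (\<lambda>i j. s i * M i j) u" "\<forall>i<k. s i \<noteq> (0::'a::idom)"
  shows "in_kernel k n M u"
proof -
  have "(\<Sum>j<n. s i * M i j * u j) = s i * (\<Sum>j<n. M i j * u j)" for i
    by (simp add: sum_distrib_left algebra_simps)
  with assms show ?thesis unfolding in_kernel_def by simp
qed

section \<open>Kernels of polynomial matrices\<close>

lemma in_kernel_poly:
  assumes "in_kernel k n G u"
  shows "in_kernel k n (\<lambda>i j. poly (G i j) x) (\<lambda>j. poly (u j) x)"
proof -
  have "(\<Sum>j<n. poly (G i j) x * poly (u j) x) = poly (\<Sum>j<n. G i j * u j) x" for i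
    by (simp add: poly_sum)
  with assms show ?thesis unfolding in_kernel_def by simp
qed

lemma degree_linear_mult:
  "q \<noteq> 0 \<Longrightarrow> degree ([:-x, 1:] * q) = degree (q :: 'a::idom poly) + 1"
  by (subst degree_mult_eq) auto

lemma common_root_factor:
  fixes u :: "nat \<Rightarrow> 'a::idom poly"
  assumes "\<forall>j<n. poly (u j) x = 0"
  obtains w where "\<forall>j<n. u j = [:-x, 1:] * w j" "\<forall>j<n. degree (w j) = degree (u j) - 1"
proof -
  have "\<forall>j<n. \<exists>q. u j = [:-x, 1:] * q"
    using assms by (metis dvd_def poly_eq_0_iff_dvd)
  then obtain w where w: "\<forall>j<n. u j = [:-x, 1:] * w j" by metis
  moreover have "degree (w j) = degree (u j) - 1" if "j < n" for j
  proof (cases "w j = 0")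
    case False
    then show ?thesis using w that degree_linear_mult[of "w j" x] by simp
  qed (use w that in simp)
  ultimately show thesis using that by blast
qed

lemma dependent_pair_poly_kernel_bounded:
  fixes G :: "nat \<Rightarrow> nat \<Rightarrow> 'a::field poly"
  assumes eval_dependent: "\<And>z z'. in_kernel k n (\<lambda>i j. poly (G i j) x) z \<Longrightarrow>
      in_kernel k n (\<lambda>i j. poly (G i j) x) z' \<Longrightarrow> dependent_pair n z z'"
  shows "in_kernel k n G u \<Longrightarrow> in_kernel k n G v \<Longrightarrow>
    \<forall>j<n. degree (u j) \<le> a \<Longrightarrow> \<forall>j<n. degree (v j) \<le> b \<Longrightarrow> dependent_pair n u v"
proof (induction "a + b" arbitrary: u v a b rule: less_induct)
  case less
  have reduce: "dependent_pair n u' v'"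
    if ker: "in_kernel k n G u'" "in_kernel k n G v'" and root: "\<forall>j<n. poly (u' j) x = 0"
      and deg: "\<forall>j<n. degree (u' j) \<le> a'" "\<forall>j<n. degree (v' j) \<le> b'" and "a' + b' = a + b"
    for u' v' a' b'
  proof (cases "\<forall>j<n. u' j = 0")
    case True
    then show ?thesis by (rule dependent_pair_zero)
  next
    case False
    then obtain j where j: "j < n" "u' j \<noteq> 0" by blast
    obtain w where w: "\<forall>j<n. u' j = [:-x, 1:] * w j" "\<forall>j<n. degree (w j) = degree (u' j) - 1"
      using common_root_factor[OF root] by blast
    have "w j \<noteq> 0" using w(1) j by auto
    then have "degree (u' j) = degree (w j) + 1"
      using w(1) j(1) degree_linear_mult[of "w j" x] by simp
    then have "a' - 1 + b' < a + b" using deg(1) j(1) \<open>a' + b' = a + b\<close> by fastforce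
    moreover have "in_kernel k n G w"
      using in_kernel_cancel[of k n G "[:-x, 1:]" w] in_kernel_cong[of k n G G u', OF _ w(1)] ker(1) by simp
    moreover have "\<forall>j<n. degree (w j) \<le> a' - 1" using w(2) deg(1) by (simp add: diff_le_mono)
    ultimately have "dependent_pair n w v'" using less.hyps ker(2) deg(2) by blast
    then show ?thesis by (rule dependent_pair_mult[OF _ _ w(1)]) simp
  qed
  show ?case
  proof (cases "\<forall>j<n. poly (u j) x = 0")
    case True
    show ?thesis by (rule reduce[OF less.prems(1,2) True less.prems(3,4)]) simp
  next
    case u_root: False
    show ?thesis
    proof (cases "\<forall>j<n. poly (v j) x = 0")
      case True
      have "dependent_pair n v u" by (rule reduce[OF less.prems(2,1) True less.prems(4,3)]) simp
      then show ?thesis by (rule dependent_pair_commute)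
    next
      case v_root: False
      obtain c d where cd: "c \<noteq> 0 \<or> d \<noteq> 0" "\<forall>j<n. c * poly (u j) x + d * poly (v j) x = 0"
        using eval_dependent[OF in_kernel_poly[OF less.prems(1)] in_kernel_poly[OF less.prems(2)]]
        unfolding dependent_pair_def by blast
      have "c \<noteq> 0" "d \<noteq> 0" using cd u_root v_root by auto
      define w where "w j = [:c:] * u j + [:d:] * v j" for j
      \<comment> \<open>w vanishes at x. Pairing it with whichever of u, v has the smaller degree bound keeps
        the sum of the bounds at a + b, and reduce then divides w by [:-x, 1:].\<close>
      have w_ker: "in_kernel k n G w"
        unfolding w_def by (rule in_kernel_lincomb[OF less.prems(1,2)])
      have w_root: "\<forall>j<n. poly (w j) x = 0" using cd(2) by (simp add: w_def)
      have w_deg: "\<forall>j<n. degree (w j) \<le> max a b"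
      proof (intro allI impI)
        fix j assume "j < n"
        have "degree (w j) \<le> max (degree (u j)) (degree (v j))"
          unfolding w_def by simp (meson degree_add_le_max degree_smult_le max.mono order_trans)
        with less.prems(3,4) \<open>j < n\<close> show "degree (w j) \<le> max a b" by fastforce
      qed
      show ?thesis
      proof (cases "b \<le> a")
        case True
        have "dependent_pair n w v"
          by (rule reduce[OF w_ker less.prems(2) w_root _ less.prems(4)]) (use w_deg True in auto)
        then show ?thesis
          by (rule dependent_pair_lincomb[where C = "[:c:]" and D = "[:d:]"])
            (simp_all add: w_def \<open>c \<noteq> 0\<close>)
      next
        case False
        have "dependent_pair n w u"
          by (rule reduce[OF w_ker less.prems(1) w_root _ less.prems(3)]) (use w_deg False in auto)
        then have "dependent_pair n v u"
          by (rule dependent_pair_lincomb[where C = "[:d:]" and D = "[:c:]"])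
            (simp_all add: w_def \<open>d \<noteq> 0\<close> add.commute)
        then show ?thesis by (rule dependent_pair_commute)
      qed
    qed
  qed
qed

lemma dependent_pair_poly_kernel:
  fixes G :: "nat \<Rightarrow> nat \<Rightarrow> 'a::field poly"
  assumes "\<And>z z'. in_kernel k n (\<lambda>i j. poly (G i j) x) z \<Longrightarrow>
      in_kernel k n (\<lambda>i j. poly (G i j) x) z' \<Longrightarrow> dependent_pair n z z'"
    and "in_kernel k n G u" "in_kernel k n G v"
  shows "dependent_pair n u v"
proof (rule dependent_pair_poly_kernel_bounded[OF assms])
  show "\<forall>j<n. degree (u j) \<le> (\<Sum>j<n. degree (u j))" "\<forall>j<n. degree (v j) \<le> (\<Sum>j<n. degree (v j))"
    by (auto intro: member_le_sum)
qed

section \<open>A rank bound over the rationals\<close>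

lemma linear_2x2_zero:
  fixes x y :: "'a::idom"
  assumes "x * a + y * b = 0" "x * a' + y * b' = 0" "a * b' - b * a' \<noteq> 0"
  shows "x = 0" "y = 0"
proof -
  have "x * (a * b' - b * a') = b' * (x * a + y * b) - b * (x * a' + y * b')"
    by (simp add: algebra_simps)
  then show "x = 0" using assms by simp
  have "y * (a * b' - b * a') = a * (x * a' + y * b') - a' * (x * a + y * b)"
    by (simp add: algebra_simps)
  then show "y = 0" using assms by simp
qed

lemma sum_fun_apply: "(\<Sum>j\<in>J. f j) l = (\<Sum>j\<in>J. f j l)"
  by (induction J rule: infinite_finite_induct) simp_all

text \<open>This is the scalar multiplication of rank_morph, which therefore unfolds to fun_vs.dim.\<close>

interpretation fun_vs: vector_space "\<lambda>(c::rat) (f::nat \<Rightarrow> rat) j. c * f j"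
  by unfold_locales (simp_all add: fun_eq_iff algebra_simps)

lemma dependent_pair_if_rank:
  fixes M :: "nat \<Rightarrow> nat \<Rightarrow> rat"
  assumes supp: "\<forall>i<k. \<forall>j\<ge>n. M i j = 0"
    and rank: "n - 1 \<le> fun_vs.dim (M ` {..<k})"
    and ker: "in_kernel k n M z" "in_kernel k n M z'"
  shows "dependent_pair n z z'"
proof (rule ccontr)
  assume "\<not> dependent_pair n z z'"
  then obtain p q where pq: "p < n" "q < n" and "z p * z' q \<noteq> z q * z' p"
    using dependent_pair_if_minors_vanish by blast
  then have D: "z p * z' q - z q * z' p \<noteq> 0" by simp
  then have "p \<noteq> q" by auto
  define J where "J = {..<n} - {p, q}"
  have J: "finite J" "p \<notin> J" "q \<notin> J" "{..<n} = insert p (insert q J)"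
    using pq by (auto simp: J_def)
  define A where "A j = (z' j * z q - z j * z' q) / (z p * z' q - z q * z' p)" for j
  define B where "B j = (z j * z' p - z' j * z p) / (z p * z' q - z q * z' p)" for j
  have AB: "z j + A j * z p + B j * z q = 0" "z' j + A j * z' p + B j * z' q = 0" for j
    using D by (simp_all add: A_def B_def field_simps)
  \<comment> \<open>b j = e_j + A j e_p + B j e_q is orthogonal to z and z'; every row of M lies in the span
    of these n - 2 vectors.\<close>
  define b where "b j l = (if l = j then 1 else 0) + (if l = p then A j else 0)
    + (if l = q then B j else 0)" for j l
  have "M i \<in> fun_vs.span (b ` J)" if "i < k" for i
  proof -
    define r where "r = M i p - (\<Sum>j\<in>J. M i j * A j)"
    define s where "s = M i q - (\<Sum>j\<in>J. M i j * B j)"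
    have rs: "r * y p + s * y q = 0"
      if "in_kernel k n M y" "\<forall>j. y j + A j * y p + B j * y q = 0" for y
    proof -
      have "A j * y p + B j * y q = - y j" for j
        using that(2) by (metis add.assoc add_eq_0_iff)
      then have "M i j * A j * y p + M i j * B j * y q = - (M i j * y j)" for j
        by (metis distrib_left mult.assoc mult_minus_right)
      then have "(\<Sum>j\<in>J. M i j * A j) * y p + (\<Sum>j\<in>J. M i j * B j) * y q
          = (\<Sum>j\<in>J. - (M i j * y j))"
        by (simp add: sum_distrib_right flip: sum.distrib)
      also have "\<dots> = - (\<Sum>j\<in>J. M i j * y j)" by (rule sum_negf)
      finally have "(\<Sum>j\<in>J. M i j * A j) * y p + (\<Sum>j\<in>J. M i j * B j) * y q
          = - (\<Sum>j\<in>J. M i j * y j)" .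
      moreover have "M i p * y p + M i q * y q + (\<Sum>j\<in>J. M i j * y j) = 0"
        using that(1) \<open>i < k\<close> J \<open>p \<noteq> q\<close> by (simp add: in_kernel_def add.assoc)
      ultimately show ?thesis by (simp add: r_def s_def algebra_simps)
    qed
    have "r = 0" "s = 0"
      using linear_2x2_zero[OF rs[OF ker(1)] rs[OF ker(2)] D] AB by simp_all
    have "(\<Sum>j\<in>J. M i j * b j l) = M i l" for l
    proof (cases "l \<in> J")
      case True
      then have "(\<Sum>j\<in>J. M i j * b j l) = (\<Sum>j\<in>J. if l = j then M i j else 0)"
        using J by (intro sum.cong) (auto simp: b_def)
      with True J(1) show ?thesis by simp
    next
      case False
      then consider "l = p" | "l = q" | "n \<le> l" using J(4) by fastforce
      then show ?thesis
      proof cases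
        case 1
        then have "(\<Sum>j\<in>J. M i j * b j l) = (\<Sum>j\<in>J. M i j * A j)"
          using J \<open>p \<noteq> q\<close> by (intro sum.cong) (auto simp: b_def)
        with 1 \<open>r = 0\<close> show ?thesis by (simp add: r_def)
      next
        case 2
        then have "(\<Sum>j\<in>J. M i j * b j l) = (\<Sum>j\<in>J. M i j * B j)"
          using J \<open>p \<noteq> q\<close> by (intro sum.cong) (auto simp: b_def)
        with 2 \<open>s = 0\<close> show ?thesis by (simp add: s_def)
      next
        case 3
        then have "(\<Sum>j\<in>J. M i j * b j l) = 0"
          using pq by (intro sum.neutral) (auto simp: b_def J_def)
        with 3 supp \<open>i < k\<close> show ?thesis by simp
      qed
    qed
    then have "(\<Sum>j\<in>J. (\<lambda>l. M i j * b j l)) = M i"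
      by (simp add: fun_eq_iff sum_fun_apply)
    moreover have "(\<Sum>j\<in>J. (\<lambda>l. M i j * b j l)) \<in> fun_vs.span (b ` J)"
      by (intro fun_vs.span_sum fun_vs.span_scale fun_vs.span_base imageI)
    ultimately show ?thesis by simp
  qed
  then have "fun_vs.dim (M ` {..<k}) \<le> card (b ` J)"
    using J(1) by (intro fun_vs.dim_le_card) auto
  also have "\<dots> \<le> card J" using J(1) by (rule card_image_le)
  also have "card J = n - 2" using pq \<open>p \<noteq> q\<close> by (simp add: J_def card_Diff_subset)
  finally show False using rank pq \<open>p \<noteq> q\<close> by linarith
qed

section \<open>Position polynomials and the equation polynomials\<close>

fun occurrence_poly :: "'b \<Rightarrow> 'b list \<Rightarrow> 'a::comm_semiring_1 poly" where
  "occurrence_poly a [] = 0"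
| "occurrence_poly a (c # w) = (if c = a then 1 else 0) + pCons 0 (occurrence_poly a w)"

lemma occurrence_poly_append:
  "occurrence_poly a (u @ v) = occurrence_poly a u + monom 1 (length u) * occurrence_poly a v"
  by (induction u) (simp_all add: monom_Suc add.assoc)

lemma occurrence_poly_concat:
  "occurrence_poly a (concat (map g w)) =
    (\<Sum>s<length w. monom 1 (\<Sum>t<s. length (g (w ! t))) * occurrence_poly a (g (w ! s))
      :: 'a::comm_semiring_1 poly)"
proof (induction w)
  case (Cons c w)
  have "occurrence_poly a (concat (map g (c # w))) = occurrence_poly a (g c) +
      monom 1 (length (g c)) * (occurrence_poly a (concat (map g w)) :: 'a poly)"
    by (simp add: occurrence_poly_append)
  also have "\<dots> = occurrence_poly a (g c) +
      (\<Sum>s<length w. monom 1 (length (g c)) *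
        (monom 1 (\<Sum>t<s. length (g (w ! t))) * occurrence_poly a (g (w ! s))))"
    by (simp only: Cons.IH sum_distrib_left)
  also have "\<dots> = (\<Sum>s<length (c # w).
      monom 1 (\<Sum>t<s. length (g ((c # w) ! t))) * occurrence_poly a (g ((c # w) ! s)))"
    by (simp only: length_Cons sum.lessThan_Suc_shift)
      (simp add: sum.lessThan_Suc_shift mult_monom flip: mult.assoc)
  finally show ?case .
qed simp

lemma poly_occurrence_poly_1: "poly (occurrence_poly a w) 1 = of_nat (count_list w a)"
  by (induction w) auto

lemma sum_group_by_letter:
  fixes w :: "nat list" and f :: "nat \<Rightarrow> 'a::comm_semiring_0"
  assumes "set w \<subseteq> {..<n}"
  shows "(\<Sum>j<n. (\<Sum>s<length w. if w ! s = j then f s else 0) * P j) = (\<Sum>s<length w. f s * P (w ! s))"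
proof -
  have "(\<Sum>j<n. (if w ! s = j then f s else 0) * P j) = f s * P (w ! s)" if "s < length w" for s
  proof -
    have "w ! s < n" using assms that nth_mem by blast
    have "(\<Sum>j<n. (if w ! s = j then f s else 0) * P j) = (\<Sum>j<n. if w ! s = j then f s * P j else 0)"
      by (intro sum.cong) simp_all
    with \<open>w ! s < n\<close> show ?thesis by simp
  qed
  then have "(\<Sum>s<length w. \<Sum>j<n. (if w ! s = j then f s else 0) * P j) = (\<Sum>s<length w. f s * P (w ! s))"
    by (intro sum.cong) simp_all
  then show ?thesis
    by (simp add: sum_distrib_right sum.swap[of _ "{..<n}" "{..<length w}"])
qed

lemma map_poly_of_int_diff:
  "map_poly of_int (p - q) = map_poly of_int p - (map_poly of_int q :: 'a::ring_1 poly)"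
  by (rule poly_eqI) (simp add: coeff_map_poly)

lemma map_poly_of_int_sum:
  "map_poly of_int (\<Sum>i\<in>A. f i) = (\<Sum>i\<in>A. map_poly of_int (f i) :: 'a::ring_1 poly)"
  by (rule poly_eqI) (simp add: coeff_map_poly coeff_sum)

lemma S_side_occurrence_poly:
  assumes "set w \<subseteq> {..<n}"
  shows "(\<Sum>j<n. map_poly of_int (S_side w j (Lvec g)) * occurrence_poly a (g j)) =
    (occurrence_poly a (concat (map g w)) :: 'a::comm_ring_1 poly)"
  unfolding S_side_def map_poly_of_int_sum occurrence_poly_concat
  by (simp add: map_poly_monom if_distrib[of "map_poly _"] sum_group_by_letter[OF assms] Lvec_def
      cong: if_cong)

lemma S_poly_in_kernel:
  assumes "is_equation n E" "is_solution g E"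
  shows "in_kernel k n (\<lambda>i j. occurrence_poly i (g j))
    (\<lambda>j. map_poly of_int (S_poly E j (Lvec g)) :: 'a::comm_ring_1 poly)"
  unfolding in_kernel_def
proof (intro allI impI)
  fix i
  have "(\<Sum>j<n. occurrence_poly i (g j) * map_poly of_int (S_poly E j (Lvec g)) :: 'a poly) =
      (\<Sum>j<n. map_poly of_int (S_side (fst E) j (Lvec g)) * occurrence_poly i (g j)) -
      (\<Sum>j<n. map_poly of_int (S_side (snd E) j (Lvec g)) * occurrence_poly i (g j))"
    by (simp add: S_poly_def map_poly_of_int_diff algebra_simps flip: sum_subtractf)
  also have "\<dots> = 0"
    using assms unfolding is_equation_def is_solution_def morph_def
    by (simp add: S_side_occurrence_poly)
  finally show "(\<Sum>j<n. occurrence_poly i (g j) * map_poly of_int (S_poly E j (Lvec g)) :: 'a poly) = 0" .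
qed

lemma theta_concat: "theta \<alpha> (concat ws) = concat (map (theta \<alpha>) ws)"
  by (induction ws) (simp_all add: theta_def)

lemma morph_theta: "morph (theta \<alpha> \<circ> h) w = theta \<alpha> (morph h w)"
  by (simp add: morph_def theta_concat)

lemma is_solution_theta: "is_solution h E \<Longrightarrow> is_solution (theta \<alpha> \<circ> h) E"
  by (simp add: is_solution_def morph_theta)

lemma count_list_replicate: "count_list (replicate m c) a = (if c = a then m else 0)"
  by (induction m) auto

lemma count_list_theta: "count_list (theta \<alpha> w) a = \<alpha> a * count_list w a"
  by (induction w) (simp_all add: theta_def count_list_replicate)

lemma dependent_pair_Fract:
  "dependent_pair n u v \<Longrightarrow> dependent_pair n (\<lambda>j. Fract (u j) 1) (\<lambda>j. Fract (v j) 1)"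
  using dependent_pair_hom[of n u v "\<lambda>p. Fract p 1"]
  by (simp add: inj_def eq_fract Zero_fract_def comp_def)

lemma dependent_pair_occurrence_kernel_at_1:
  fixes z z' :: "nat \<Rightarrow> rat"
  assumes "n - 1 \<le> rank_morph n k h" "\<forall>i<k. \<alpha> i > 0"
    and "in_kernel k n (\<lambda>i j. poly (occurrence_poly i (theta \<alpha> (h j))) 1) z"
    and "in_kernel k n (\<lambda>i j. poly (occurrence_poly i (theta \<alpha> (h j))) 1) z'"
  shows "dependent_pair n z z'"
proof (rule dependent_pair_if_rank)
  have eval: "\<forall>i<k. \<forall>j<n. poly (occurrence_poly i (theta \<alpha> (h j))) 1 = of_nat (\<alpha> i) * gamma n h i j"
    by (simp add: gamma_def poly_occurrence_poly_1 count_list_theta)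
  have "in_kernel k n (gamma n h) y"
    if "in_kernel k n (\<lambda>i j. poly (occurrence_poly i (theta \<alpha> (h j))) 1) y" for y
  proof (rule in_kernel_scaled_rows[where s = "\<lambda>i. of_nat (\<alpha> i)"])
    show "in_kernel k n (\<lambda>i j. of_nat (\<alpha> i) * gamma n h i j) y"
      using that in_kernel_cong[OF eval, of y y] by simp
    show "\<forall>i<k. of_nat (\<alpha> i) \<noteq> (0::rat)" using assms(2) by simp
  qed
  then show "in_kernel k n (gamma n h) z" "in_kernel k n (gamma n h) z'"
    using assms(3,4) by blast+
qed (use assms(1) in \<open>simp_all add: gamma_def rank_morph_def\<close>)

theorem lemma3p2:
  fixes n k :: nat and h :: "nat \<Rightarrow> nat list" and E E' :: "nat list \<times> nat list"
    and \<alpha> :: "nat \<Rightarrow> nat"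
  assumes "is_morph n k h"
    and "is_equation n E" and "is_equation n E'"
    and "is_solution h E" and "is_solution h E'"
    and "rank_morph n k h = n - 1"
    and "\<forall>i<k. \<alpha> i > 0"
  shows "lin_dep_Qx n (\<lambda>j. S_poly E j (Lvec (theta \<alpha> \<circ> h)))
                      (\<lambda>j. S_poly E' j (Lvec (theta \<alpha> \<circ> h)))"
proof -
  define G :: "nat \<Rightarrow> nat \<Rightarrow> rat poly" where "G i j = occurrence_poly i (theta \<alpha> (h j))" for i j
  define u :: "nat \<Rightarrow> rat poly" where "u j = map_poly of_int (S_poly E j (Lvec (theta \<alpha> \<circ> h)))" for j
  define u' :: "nat \<Rightarrow> rat poly" where "u' j = map_poly of_int (S_poly E' j (Lvec (theta \<alpha> \<circ> h)))" for j
  have "in_kernel k n G u" "in_kernel k n G u'"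
    using S_poly_in_kernel[OF assms(2) is_solution_theta[OF assms(4)]]
      S_poly_in_kernel[OF assms(3) is_solution_theta[OF assms(5)]]
    unfolding G_def u_def u'_def comp_apply .
  then have "dependent_pair n u u'"
    using dependent_pair_occurrence_kernel_at_1[of n k h \<alpha>] assms(6,7) unfolding G_def
    by (intro dependent_pair_poly_kernel[where x = 1]) simp_all
  then have "dependent_pair n (\<lambda>j. Fract (u j) 1) (\<lambda>j. Fract (u' j) 1)"
    by (rule dependent_pair_Fract)
  then show ?thesis
    unfolding lin_dep_Qx_def to_Qx_def dependent_pair_def u_def u'_def .
qed

end
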